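(* Let $\mathcal{Z}=\mathcal{X}\times\mathcal{Y}$, $\mathcal{H}$ a set of hypotheses $h:\mathcal{X}\to\mathcal{Y}$, $n\in\mathbb{N}$, $\mathcal{D}$ a distribution on $\mathcal{Z}$, $S\sim\mathcal{D}^n$, and let $\mathcal{A}$ be a learning algorithm given by a Markov kernel $\mathcal{P}_{H|S}$, $H=\mathcal{A}(S)$, with $\mathcal{P}_{SH}\ll\mathcal{P}_S\mathcal{P}_H$. Consider the $0$-$1$ loss. Then for every $h\in\mathcal{H}$ and $\eta>0$, $\mathbb{P}_{S\sim\mathcal{D}^n}(|L_S(h)-L_{\mathcal{D}}(h)|>\eta)\le2\exp(-2\eta^2n)$, and $$\mathbb{E}\left[|L_S(H)-L_{\mathcal{D}}(H)|\right]\le\frac{1}{\sqrt{2n}}\left(\sqrt{\log2+\mathcal{L}(S\to\mathcal{A}(S))}+\frac{1}{2\sqrt{\log2+\mathcal{L}(S\to\mathcal{A}(S))}}\right).$$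
   Context: The $0$-$1$ loss is $\ell(h,(x,y))=\mathbb{1}_{h(x)\ne y}$; $L_{\mathcal{D}}(h)=\mathcal{D}(\{(x,y):h(x)\ne y\})$, and for $s=((x_i,y_i))_{i=1}^n$, $L_s(h)=\frac1n\sum_{i=1}^n\mathbb{1}_{h(x_i)\ne y_i}$. The maximal leakage from $S$ to $H$ is $\mathcal{L}(S\to H)=\log\mathbb{E}_{\mathcal{P}_H}\left[\operatorname*{ess\,sup}_{\mathcal{P}_S}f(\cdot,H)\right]$ with $f=\frac{d\mathcal{P}_{SH}}{d\mathcal{P}_S\mathcal{P}_H}$, the essential supremum over the first argument taken with respect to $\mathcal{P}_S$ (this is Sibson's mutual information of order $\infty$). Logarithms are natural. *)

theory Defs
  imports "HOL-Probability.Probability"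
begin

definition zero_one_loss :: "('x \<Rightarrow> 'y) \<Rightarrow> 'x \<times> 'y \<Rightarrow> real" where
  "zero_one_loss h z = (if h (fst z) \<noteq> snd z then 1 else 0)"

definition true_risk :: "('x \<times> 'y) measure \<Rightarrow> ('x \<Rightarrow> 'y) \<Rightarrow> real" where
  "true_risk D h = measure D {z \<in> space D. h (fst z) \<noteq> snd z}"

definition emp_risk :: "nat \<Rightarrow> (nat \<Rightarrow> 'x \<times> 'y) \<Rightarrow> ('x \<Rightarrow> 'y) \<Rightarrow> real" where
  "emp_risk n s h = (\<Sum>i<n. zero_one_loss h (s i)) / real n"

definition sample_dist :: "nat \<Rightarrow> ('x \<times> 'y) measure \<Rightarrow> (nat \<Rightarrow> 'x \<times> 'y) measure" where
  "sample_dist n D = PiM {..<n} (\<lambda>_. D)"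

text \<open>Joint distribution P_SH of (S, H) for the kernel K = P_{H|S}.\<close>
definition joint_dist :: "'s measure \<Rightarrow> 'h measure \<Rightarrow> ('s \<Rightarrow> 'h measure) \<Rightarrow> ('s \<times> 'h) measure" where
  "joint_dist PS HS K = PS \<bind> (\<lambda>s. K s \<bind> (\<lambda>h. return (PS \<Otimes>\<^sub>M HS) (s, h)))"

definition output_dist :: "'s measure \<Rightarrow> ('s \<Rightarrow> 'h measure) \<Rightarrow> 'h measure" where
  "output_dist PS K = PS \<bind> K"

text \<open>exp of the maximal leakage:
  E_{P_H}[ess sup_{P_S} f(., H)] with f = dP_SH / d(P_S x P_H).\<close>
definition exp_max_leakage :: "'s measure \<Rightarrow> 'h measure \<Rightarrow> ('s \<Rightarrow> 'h measure) \<Rightarrow> ennreal" where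
  "exp_max_leakage PS HS K =
     (\<integral>\<^sup>+ h. esssup PS (\<lambda>s. RN_deriv (PS \<Otimes>\<^sub>M output_dist PS K) (joint_dist PS HS K) (s, h))
        \<partial>output_dist PS K)"

text \<open>Maximal leakage L(S -> H) (natural log); meaningful when exp_max_leakage is finite.\<close>
definition max_leakage :: "'s measure \<Rightarrow> 'h measure \<Rightarrow> ('s \<Rightarrow> 'h measure) \<Rightarrow> real" where
  "max_leakage PS HS K = ln (enn2real (exp_max_leakage PS HS K))"

end

theory Submission
  imports Defs "HOL-Real_Asymp.Real_Asymp"
begin

text \<open>
  By Hoeffding's inequality every fixed hypothesis has a sub-Gaussian deviation tail under the
  sample distribution \<open>P\<^sub>S\<close>, hence under \<open>P\<^sub>S \<times> P\<^sub>H\<close>. Passing to \<open>P\<^sub>S\<^sub>H\<close> costs at most the factor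
  \<open>exp \<L>(S \<rightarrow> H)\<close>: on every section \<open>{s. (s, h) \<in> E}\<close> the density \<open>dP\<^sub>S\<^sub>H / d(P\<^sub>S \<times> P\<^sub>H)\<close> is bounded
  by its essential supremum. With \<open>L = log 2 + \<L>(S \<rightarrow> H)\<close> this gives
  \<open>P\<^sub>S\<^sub>H(|L\<^sub>S(H) - L\<^sub>D(H)| > t) \<le> exp (L - 2 n t\<^sup>2)\<close>, and the expectation is bounded by integrating the
  tail (layer-cake formula): by \<open>1\<close> up to \<open>t\<^sub>0 = sqrt (L / 2n)\<close>, by the exponential of the tangent
  line at \<open>t\<^sub>0\<close> beyond it.
\<close>

lemma true_risk_eq_integral:
  assumes "prob_space D" and "zero_one_loss h \<in> borel_measurable D"
  shows "true_risk D h = (\<integral>z. zero_one_loss h z \<partial>D)"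
proof -
  define A where "A = {z \<in> space D. h (fst z) \<noteq> snd z}"
  have "A = zero_one_loss h -` {1} \<inter> space D"
    by (auto simp: A_def zero_one_loss_def)
  then have A: "A \<in> sets D"
    using assms(2) by (simp add: measurable_sets)
  have "(\<integral>z. zero_one_loss h z \<partial>D) = (\<integral>z. indicator A z \<partial>D)"
    by (intro Bochner_Integration.integral_cong) (auto simp: A_def zero_one_loss_def indicator_def)
  also have "\<dots> = measure D A"
    using A by simp
  finally show ?thesis
    by (simp add: true_risk_def A_def)
qed

lemma indep_vars_PiM_components:
  assumes M: "\<And>i. i \<in> I \<Longrightarrow> prob_space (M i)" and "I \<noteq> {}"
  shows "prob_space.indep_vars (\<Pi>\<^sub>M i\<in>I. M i) M (\<lambda>i s. s i) I"
proof -
  interpret prob_space "\<Pi>\<^sub>M i\<in>I. M i"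
    using M by (rule prob_space_PiM)
  have "distr (\<Pi>\<^sub>M i\<in>I. M i) (\<Pi>\<^sub>M i\<in>I. M i) (\<lambda>s. \<lambda>i\<in>I. s i)
        = distr (\<Pi>\<^sub>M i\<in>I. M i) (\<Pi>\<^sub>M i\<in>I. M i) (\<lambda>s. s)"
    by (intro distr_cong) (auto simp: space_PiM PiE_def extensional_restrict)
  also have "\<dots> = (\<Pi>\<^sub>M i\<in>I. M i)"
    by simp
  also have "\<dots> = (\<Pi>\<^sub>M i\<in>I. distr (\<Pi>\<^sub>M i\<in>I. M i) (M i) (\<lambda>s. s i))"
    by (intro PiM_cong refl) (rule sym, rule distr_PiM_component[OF M])
  finally show ?thesis
    using \<open>I \<noteq> {}\<close> by (subst indep_vars_iff_distr_eq_PiM') auto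
qed

lemma prob_sample_mean_deviation_le:
  fixes f :: "'a \<Rightarrow> real" and n :: nat
  assumes D: "prob_space D" and n: "n > 0" and f: "f \<in> borel_measurable D"
    and f01: "\<And>z. f z \<in> {0..1}" and \<eta>: "\<eta> > 0"
  shows "prob_space.prob (\<Pi>\<^sub>M i\<in>{..<n}. D)
           {s \<in> space (\<Pi>\<^sub>M i\<in>{..<n}. D). \<bar>(\<Sum>i<n. f (s i)) / real n - (\<integral>z. f z \<partial>D)\<bar> \<ge> \<eta>}
         \<le> 2 * exp (- 2 * \<eta>\<^sup>2 * real n)"
proof -
  define PS where "PS = (\<Pi>\<^sub>M i\<in>{..<n}. D)"
  interpret S: prob_space PS
    unfolding PS_def using D by (rule prob_space_PiM)
  define X :: "nat \<Rightarrow> (nat \<Rightarrow> 'a) \<Rightarrow> real" where "X = (\<lambda>i s. f (s i))"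
  have component: "i < n \<Longrightarrow> distr PS D (\<lambda>s. s i) = D" for i
    unfolding PS_def by (rule distr_PiM_component) (auto simp: D)
  have X_measurable: "i < n \<Longrightarrow> X i \<in> borel_measurable PS" for i
    unfolding X_def PS_def by (rule measurable_compose[OF _ f], rule measurable_component_singleton) simp
  have distr_X: "distr PS borel (X i) = distr D borel f" if i: "i < n" for i
  proof -
    have "distr D borel f = distr (distr PS D (\<lambda>s. s i)) borel f"
      using component[OF i] by simp
    also have "\<dots> = distr PS borel (X i)"
      using f i by (subst distr_distr) (auto simp: X_def comp_def PS_def)
    finally show ?thesis by simp
  qed
  have "S.indep_vars (\<lambda>_. D) (\<lambda>i s. s i) {..<n}"
    unfolding PS_def using D n by (intro indep_vars_PiM_components) auto
  then have indep: "S.indep_vars (\<lambda>_. borel) X {..<n}"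
    unfolding X_def using f by (rule S.indep_vars_compose2)
  interpret iid_interval_bounded_random_variables PS "{..<n}" X "X 0" 0 1
  proof
    show "distr PS borel (X i) = distr PS borel (X 0)" if "i \<in> {..<n}" for i
      using distr_X[of i] distr_X[of 0] that n by simp
  qed (use indep X_measurable n f01 in \<open>auto simp: X_def\<close>)
  interpret Hoeffding_ineq_iid PS "{..<n}" X "X 0" 0 1 "S.expectation (X 0)"
    by unfold_locales
  have "S.expectation (X 0) = (\<integral>z. f z \<partial>distr PS D (\<lambda>s. s 0))"
    using f n by (subst integral_distr) (auto simp: X_def PS_def)
  then have mean: "S.expectation (X 0) = (\<integral>z. f z \<partial>D)"
    using component[OF n] by simp
  show ?thesis
    using Hoeffding_ineq_abs_ge'[of \<eta>] \<eta> n unfolding mean by (auto simp: X_def PS_def mult_ac)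
qed

lemma emp_risk_deviation_prob_le:
  assumes D: "prob_space D" and n: "n > 0" and loss: "zero_one_loss h \<in> borel_measurable D"
    and \<eta>: "\<eta> > 0"
  shows "prob_space.prob (sample_dist n D)
           {s \<in> space (sample_dist n D). \<bar>emp_risk n s h - true_risk D h\<bar> > \<eta>}
         \<le> 2 * exp (- 2 * \<eta>\<^sup>2 * real n)"
proof -
  interpret S: prob_space "sample_dist n D"
    unfolding sample_dist_def using D by (rule prob_space_PiM)
  have "S.prob {s \<in> space (sample_dist n D). \<bar>emp_risk n s h - true_risk D h\<bar> > \<eta>}
      \<le> S.prob {s \<in> space (sample_dist n D).
           \<bar>(\<Sum>i<n. zero_one_loss h (s i)) / real n - (\<integral>z. zero_one_loss h z \<partial>D)\<bar> \<ge> \<eta>}"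
    using loss by (intro S.finite_measure_mono)
      (auto simp: emp_risk_def true_risk_eq_integral[OF D loss] sample_dist_def)
  also have "\<dots> \<le> 2 * exp (- 2 * \<eta>\<^sup>2 * real n)"
    using prob_sample_mean_deviation_le[OF D n loss _ \<eta>]
    by (simp add: sample_dist_def zero_one_loss_def)
  finally show ?thesis .
qed

lemma emeasure_le_esssup_RN_deriv:
  fixes PSH :: "('s \<times> 'h) measure" and \<delta> :: real
  assumes PS: "prob_space PS" and PH: "prob_space PH"
    and sets: "sets PSH = sets (PS \<Otimes>\<^sub>M PH)"
    and ac: "absolutely_continuous (PS \<Otimes>\<^sub>M PH) PSH"
    and E[measurable]: "E \<in> sets (PS \<Otimes>\<^sub>M PH)" and \<delta>: "\<delta> > 0"
    and small_sections: "\<And>h. h \<in> space PH \<Longrightarrow> emeasure PS {s \<in> space PS. (s, h) \<in> E} \<le> \<delta>"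
  shows "emeasure PSH E \<le> \<delta> * (\<integral>\<^sup>+ h. esssup PS (\<lambda>s. RN_deriv (PS \<Otimes>\<^sub>M PH) PSH (s, h)) \<partial>PH)"
proof -
  interpret P: pair_sigma_finite PS PH
    using PS PH by (simp add: pair_sigma_finite_def prob_space_imp_sigma_finite)
  define f where "f = RN_deriv (PS \<Otimes>\<^sub>M PH) PSH"
  define g where "g h = esssup PS (\<lambda>s. f (s, h))" for h
  define m where "m h = (\<integral>\<^sup>+ s. f (s, h) * indicator E (s, h) \<partial>PS)" for h
  have [measurable]: "f \<in> borel_measurable (PS \<Otimes>\<^sub>M PH)"
    unfolding f_def by simp
  have [measurable]: "m \<in> borel_measurable PH"
    unfolding m_def by measurable
  have m_le: "m h \<le> \<delta> * g h" if h: "h \<in> space PH" for h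
  proof -
    have "AE s in PS. f (s, h) * indicator E (s, h) \<le> g h * indicator {s \<in> space PS. (s, h) \<in> E} s"
      using esssup_AE[of "\<lambda>s. f (s, h)" PS] AE_space unfolding g_def
      by eventually_elim (auto simp: indicator_def)
    then have "m h \<le> (\<integral>\<^sup>+ s. g h * indicator {s \<in> space PS. (s, h) \<in> E} s \<partial>PS)"
      unfolding m_def by (rule nn_integral_mono_AE)
    also have "\<dots> = g h * emeasure PS {s \<in> space PS. (s, h) \<in> E}"
      using h by (intro nn_integral_cmult_indicator) measurable
    also have "\<dots> \<le> g h * \<delta>"
      using small_sections[OF h] by (rule mult_left_mono) simp
    finally show ?thesis
      by (simp add: mult.commute)
  qed
  have "emeasure PSH E = emeasure (density (PS \<Otimes>\<^sub>M PH) f) E"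
    using P.sigma_finite_measure_axioms[THEN sigma_finite_measure.density_RN_deriv, OF ac sets]
    by (simp add: f_def)
  also have "\<dots> = (\<integral>\<^sup>+ z. f z * indicator E z \<partial>(PS \<Otimes>\<^sub>M PH))"
    by (rule emeasure_density) auto
  also have "\<dots> = (\<integral>\<^sup>+ h. m h \<partial>PH)"
    unfolding m_def by (rule P.nn_integral_snd[symmetric]) measurable
  \<comment> \<open>\<open>g\<close> need not be measurable, so the constant is pulled out of the measurable \<open>m\<close>\<close>
  also have "\<dots> = (\<integral>\<^sup>+ h. \<delta> * (m h / \<delta>) \<partial>PH)"
    using \<delta> by (intro nn_integral_cong) (simp add: ennreal_times_divide mult.commute[of "ennreal \<delta>"] mult_divide_eq_ennreal)
  also have "\<dots> = \<delta> * (\<integral>\<^sup>+ h. m h / \<delta> \<partial>PH)"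
    by (rule nn_integral_cmult) measurable
  also have "\<dots> \<le> \<delta> * (\<integral>\<^sup>+ h. g h \<partial>PH)"
    using m_le \<delta> by (intro mult_left_mono nn_integral_mono divide_le_posI_ennreal) auto
  finally show ?thesis
    by (simp add: g_def f_def)
qed

lemma nn_integral_esssup_RN_deriv_ge_1:
  assumes PS: "prob_space PS" and PH: "prob_space PH" and PSH: "prob_space PSH"
    and sets: "sets PSH = sets (PS \<Otimes>\<^sub>M PH)"
    and ac: "absolutely_continuous (PS \<Otimes>\<^sub>M PH) PSH"
  shows "1 \<le> (\<integral>\<^sup>+ h. esssup PS (\<lambda>s. RN_deriv (PS \<Otimes>\<^sub>M PH) PSH (s, h)) \<partial>PH)"
proof -
  have "emeasure PSH (space (PS \<Otimes>\<^sub>M PH))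
        \<le> ennreal 1 * (\<integral>\<^sup>+ h. esssup PS (\<lambda>s. RN_deriv (PS \<Otimes>\<^sub>M PH) PSH (s, h)) \<partial>PH)"
    using PS by (intro emeasure_le_esssup_RN_deriv[OF PS PH sets ac])
      (auto simp: space_pair_measure prob_space.emeasure_space_1)
  moreover have "space PSH = space (PS \<Otimes>\<^sub>M PH)"
    using sets by (rule sets_eq_imp_space_eq)
  ultimately show ?thesis
    using prob_space.emeasure_space_1[OF PSH] by simp
qed

lemma nn_integral_eq_nn_integral_tail:
  fixes f :: "'a \<Rightarrow> real"
  assumes M: "sigma_finite_measure M" and f[measurable]: "f \<in> borel_measurable M"
    and nonneg: "\<And>x. 0 \<le> f x"
  shows "(\<integral>\<^sup>+ x. f x \<partial>M) = (\<integral>\<^sup>+ t. emeasure M {x \<in> space M. t < f x} * indicator {0..} t \<partial>lborel)"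
proof -
  interpret pair_sigma_finite M lborel
    using M by (simp add: pair_sigma_finite_def lborel.sigma_finite_measure_axioms)
  define g :: "'a \<times> real \<Rightarrow> ennreal"
    where "g p = indicator {x \<in> space M. snd p < f x} (fst p) * indicator {0..} (snd p)" for p
  have [measurable]: "g \<in> borel_measurable (M \<Otimes>\<^sub>M lborel)"
    unfolding g_def by measurable
  have "(\<integral>\<^sup>+ x. f x \<partial>M) = (\<integral>\<^sup>+ x. (\<integral>\<^sup>+ t. g (x, t) \<partial>lborel) \<partial>M)"
  proof (intro nn_integral_cong)
    fix x assume "x \<in> space M"
    then have "(\<integral>\<^sup>+ t. g (x, t) \<partial>lborel) = (\<integral>\<^sup>+ t. indicator {0..<f x} t \<partial>lborel)"
      by (intro nn_integral_cong) (auto simp: g_def indicator_def)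
    then show "ennreal (f x) = (\<integral>\<^sup>+ t. g (x, t) \<partial>lborel)"
      using nonneg[of x] by simp
  qed
  also have "\<dots> = (\<integral>\<^sup>+ t. (\<integral>\<^sup>+ x. g (x, t) \<partial>M) \<partial>lborel)"
    by (rule Fubini[symmetric]) measurable
  also have "\<dots> = (\<integral>\<^sup>+ t. emeasure M {x \<in> space M. t < f x} * indicator {0..} t \<partial>lborel)"
    unfolding g_def by (intro nn_integral_cong) (simp add: nn_integral_multc)
  finally show ?thesis .
qed

lemma integral_le_of_exponential_tail:
  fixes f :: "'a \<Rightarrow> real"
  assumes M: "prob_space M" and f[measurable]: "f \<in> borel_measurable M"
    and nonneg: "\<And>x. 0 \<le> f x" and t0: "0 \<le> t0" and r: "r > 0"
    and tail: "\<And>t. t > t0 \<Longrightarrow> emeasure M {x \<in> space M. t < f x} \<le> exp (- r * (t - t0))"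
  shows "(\<integral>x. f x \<partial>M) \<le> t0 + 1 / r"
proof -
  interpret prob_space M by fact
  define B where "B t = indicator {0..t0} t + ennreal (exp (- r * (t - t0))) * indicator {t0..} t" for t
  have "(\<integral>\<^sup>+ x. f x \<partial>M) = (\<integral>\<^sup>+ t. emeasure M {x \<in> space M. t < f x} * indicator {0..} t \<partial>lborel)"
    using nonneg by (intro nn_integral_eq_nn_integral_tail) (auto simp: sigma_finite_measure_axioms)
  also have "\<dots> \<le> (\<integral>\<^sup>+ t. B t \<partial>lborel)"
  proof (intro nn_integral_mono)
    fix t :: real
    consider "t < 0" | "0 \<le> t" "t \<le> t0" | "t0 < t"
      by linarith
    then show "emeasure M {x \<in> space M. t < f x} * indicator {0..} t \<le> B t"
    proof cases
      case 2
      then show ?thesis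
        by (simp add: B_def) (intro add_increasing2 emeasure_le_1 zero_le)
    next
      case 3
      then show ?thesis
        using tail[OF 3] t0 by (simp add: B_def)
    qed (simp add: B_def)
  qed
  also have "\<dots> = (\<integral>\<^sup>+ t. indicator {0..t0} t \<partial>lborel)
                  + (\<integral>\<^sup>+ t. ennreal (exp (- r * (t - t0))) * indicator {t0..} t \<partial>lborel)"
    unfolding B_def by (rule nn_integral_add) measurable
  also have "(\<integral>\<^sup>+ t. indicator {0..t0} t \<partial>lborel) = ennreal t0"
    using t0 by simp
  also have "(\<integral>\<^sup>+ t. ennreal (exp (- r * (t - t0))) * indicator {t0..} t \<partial>lborel)
             = ennreal (0 - (- exp (- r * (t0 - t0)) / r))"
  proof (rule nn_integral_FTC_atLeast[where F="\<lambda>t. - exp (- r * (t - t0)) / r" and T=0])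
    show "DERIV (\<lambda>t. - exp (- r * (t - t0)) / r) t :> exp (- r * (t - t0))" for t
      using r by (auto intro!: derivative_eq_intros simp: field_simps)
    show "((\<lambda>t. - exp (- r * (t - t0)) / r) \<longlongrightarrow> 0) at_top"
      using r by real_asymp
  qed auto
  finally have "(\<integral>\<^sup>+ x. f x \<partial>M) \<le> ennreal (t0 + 1 / r)"
    using t0 r by (simp add: ennreal_plus)
  then show ?thesis
    using nonneg t0 r by (subst integral_eq_nn_integral) (auto intro: enn2real_leI)
qed

lemma integral_le_max_leakage_bound:
  fixes PSH :: "('s \<times> 'h) measure" and X :: "'s \<times> 'h \<Rightarrow> real" and a A :: real
  assumes PS: "prob_space PS" and PH: "prob_space PH" and PSH: "prob_space PSH"
    and sets: "sets PSH = sets (PS \<Otimes>\<^sub>M PH)"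
    and ac: "absolutely_continuous (PS \<Otimes>\<^sub>M PH) PSH"
    and X[measurable]: "X \<in> borel_measurable (PS \<Otimes>\<^sub>M PH)" and nonneg: "\<And>p. 0 \<le> X p"
    and a: "a > 0"
    and section_tail: "\<And>h t. h \<in> space PH \<Longrightarrow> t > 0 \<Longrightarrow>
           emeasure PS {s \<in> space PS. t < X (s, h)} \<le> ennreal (2 * exp (- a * t\<^sup>2))"
    and A: "(\<integral>\<^sup>+ h. esssup PS (\<lambda>s. RN_deriv (PS \<Otimes>\<^sub>M PH) PSH (s, h)) \<partial>PH) = ennreal A"
  shows "(\<integral>p. X p \<partial>PSH) \<le> 1 / sqrt a * (sqrt (ln 2 + ln A) + 1 / (2 * sqrt (ln 2 + ln A)))"
proof -
  have "1 \<le> A"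
    using nn_integral_esssup_RN_deriv_ge_1[OF PS PH PSH sets ac] by (simp add: A)
  define L where "L = ln 2 + ln A"
  have L: "L > 0" and exp_L: "exp L = 2 * A"
    using \<open>1 \<le> A\<close> by (auto simp: L_def exp_add add_pos_nonneg)
  \<comment> \<open>\<open>t0\<close> and \<open>r\<close> make \<open>t \<mapsto> -r (t - t0)\<close> the tangent of \<open>t \<mapsto> L - a t\<^sup>2\<close> at its zero \<open>t0\<close>\<close>
  define t0 where "t0 = sqrt (L / a)"
  define r where "r = 2 * a * t0"
  have t0: "t0 > 0" and r: "r > 0" and L_eq: "L = a * t0\<^sup>2"
    using L a by (auto simp: t0_def r_def)
  have space_PSH: "space PSH = space (PS \<Otimes>\<^sub>M PH)"
    using sets by (rule sets_eq_imp_space_eq)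
  have "(\<integral>p. X p \<partial>PSH) \<le> t0 + 1 / r"
  proof (rule integral_le_of_exponential_tail[OF PSH _ nonneg _ r])
    fix t assume "t > t0"
    define E where "E = {p \<in> space (PS \<Otimes>\<^sub>M PH). t < X p}"
    have "emeasure PSH E \<le> ennreal (2 * exp (- a * t\<^sup>2)) * ennreal A"
      unfolding A[symmetric]
    proof (rule emeasure_le_esssup_RN_deriv[OF PS PH sets ac])
      fix h assume "h \<in> space PH"
      then have "{s \<in> space PS. (s, h) \<in> E} = {s \<in> space PS. t < X (s, h)}"
        by (auto simp: E_def space_pair_measure)
      then show "emeasure PS {s \<in> space PS. (s, h) \<in> E} \<le> ennreal (2 * exp (- a * t\<^sup>2))"
        using section_tail[OF \<open>h \<in> space PH\<close>, of t] \<open>t > t0\<close> t0 by simp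
    qed (auto simp: E_def)
    also have "\<dots> = ennreal (exp (L - a * t\<^sup>2))"
      using \<open>1 \<le> A\<close> by (simp add: exp_diff exp_L ennreal_mult[symmetric] exp_minus field_simps)
    also have "\<dots> \<le> ennreal (exp (- r * (t - t0)))"
    proof (intro ennreal_leI, subst exp_le_cancel_iff)
      have "0 \<le> a * (t - t0)\<^sup>2"
        using a by simp
      then show "L - a * t\<^sup>2 \<le> - r * (t - t0)"
        unfolding L_eq r_def by (simp add: algebra_simps power2_eq_square)
    qed
    finally show "emeasure PSH {p \<in> space PSH. t < X p} \<le> ennreal (exp (- r * (t - t0)))"
      by (simp add: E_def space_PSH)
  qed (use sets t0 in auto)
  also have "t0 + 1 / r = 1 / sqrt a * (sqrt L + 1 / (2 * sqrt L))"
    using a L by (simp add: t0_def r_def real_sqrt_divide field_simps)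
  finally show ?thesis
    by (simp add: L_def)
qed

lemma
  assumes PS: "prob_space PS" and K: "K \<in> PS \<rightarrow>\<^sub>M prob_algebra HS"
  shows prob_space_joint_dist: "prob_space (joint_dist PS HS K)"
    and sets_joint_dist: "sets (joint_dist PS HS K) = sets (PS \<Otimes>\<^sub>M HS)"
    and prob_space_output_dist: "prob_space (output_dist PS K)"
    and sets_output_dist: "sets (output_dist PS K) = sets HS"
proof -
  have PS': "PS \<in> space (prob_algebra PS)"
    using PS by (simp add: space_prob_algebra)
  have "(\<lambda>(s, h). return (PS \<Otimes>\<^sub>M HS) (s, h)) \<in> PS \<Otimes>\<^sub>M HS \<rightarrow>\<^sub>M prob_algebra (PS \<Otimes>\<^sub>M HS)"
    using measurable_return_prob_space[of "PS \<Otimes>\<^sub>M HS"] by (simp add: case_prod_eta)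
  note joint = measurable_bind_prob_space2[OF K this]
  show "prob_space (joint_dist PS HS K)" "sets (joint_dist PS HS K) = sets (PS \<Otimes>\<^sub>M HS)"
    unfolding joint_dist_def by (rule prob_space_bind'[OF PS' joint] sets_bind'[OF PS' joint])+
  show "prob_space (output_dist PS K)" "sets (output_dist PS K) = sets HS"
    unfolding output_dist_def by (rule prob_space_bind'[OF PS' K] sets_bind'[OF PS' K])+
qed

lemma measurable_emp_risk_deviation:
  assumes D: "prob_space D"
    and loss: "(\<lambda>(h, z). zero_one_loss h z) \<in> borel_measurable (HS \<Otimes>\<^sub>M D)"
  shows "(\<lambda>p. \<bar>emp_risk n (fst p) (snd p) - true_risk D (snd p)\<bar>)
           \<in> borel_measurable (sample_dist n D \<Otimes>\<^sub>M HS)"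
proof -
  interpret D: prob_space D by fact
  have loss_h: "zero_one_loss h \<in> borel_measurable D" if "h \<in> space HS" for h
    using measurable_compose[OF measurable_Pair1'[OF that] loss] by simp
  have "(\<lambda>h. \<integral>z. zero_one_loss h z \<partial>D) \<in> borel_measurable HS"
    using loss by (intro D.borel_measurable_lebesgue_integral) simp
  then have true_risk: "(\<lambda>h. true_risk D h) \<in> borel_measurable HS"
    by (rule measurable_cong[THEN iffD1, rotated]) (simp add: true_risk_eq_integral[OF D loss_h])
  have loss_i: "(\<lambda>p. zero_one_loss (snd p) (fst p i)) \<in> borel_measurable (sample_dist n D \<Otimes>\<^sub>M HS)"
    if "i < n" for i
  proof -
    have "(\<lambda>p. (snd p, fst p i)) \<in> sample_dist n D \<Otimes>\<^sub>M HS \<rightarrow>\<^sub>M HS \<Otimes>\<^sub>M D"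
      using that by (intro measurable_Pair measurable_snd measurable_compose[OF measurable_fst])
        (auto simp: sample_dist_def intro!: measurable_component_singleton)
    from measurable_compose[OF this loss] show ?thesis
      by simp
  qed
  show ?thesis
    unfolding emp_risk_def
    by (intro borel_measurable_abs borel_measurable_diff borel_measurable_divide borel_measurable_sum
        loss_i measurable_compose[OF measurable_snd true_risk]) auto
qed

theorem corollary7:
  fixes D :: "('x \<times> 'y) measure"
    and HS :: "('x \<Rightarrow> 'y) measure"
    and K :: "(nat \<Rightarrow> 'x \<times> 'y) \<Rightarrow> ('x \<Rightarrow> 'y) measure"
    and n :: nat
  assumes D: "prob_space D"
    and n: "n > 0"
    and loss_meas: "(\<lambda>(h, z). zero_one_loss h z) \<in> borel_measurable (HS \<Otimes>\<^sub>M D)"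
    and K: "K \<in> measurable (sample_dist n D) (prob_algebra HS)"
    and ac: "absolutely_continuous (sample_dist n D \<Otimes>\<^sub>M output_dist (sample_dist n D) K)
               (joint_dist (sample_dist n D) HS K)"
  shows "(\<forall>h \<in> space HS. \<forall>\<eta>::real. \<eta> > 0 \<longrightarrow>
            prob_space.prob (sample_dist n D)
              {s \<in> space (sample_dist n D). \<bar>emp_risk n s h - true_risk D h\<bar> > \<eta>}
            \<le> 2 * exp (- 2 * \<eta>\<^sup>2 * real n))
       \<and> (exp_max_leakage (sample_dist n D) HS K = \<infinity> \<or>
          (\<integral>p. \<bar>emp_risk n (fst p) (snd p) - true_risk D (snd p)\<bar> \<partial>joint_dist (sample_dist n D) HS K)
          \<le> 1 / sqrt (2 * real n) *
             (sqrt (ln 2 + max_leakage (sample_dist n D) HS K)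
              + 1 / (2 * sqrt (ln 2 + max_leakage (sample_dist n D) HS K))))"
proof -
  define PS where "PS = sample_dist n D"
  define PH where "PH = output_dist PS K"
  interpret S: prob_space PS
    unfolding PS_def sample_dist_def using D by (rule prob_space_PiM)
  have K': "K \<in> PS \<rightarrow>\<^sub>M prob_algebra HS"
    using K by (simp add: PS_def)
  have PH: "prob_space PH" and sets_PH: "sets PH = sets HS"
    unfolding PH_def using S.prob_space_axioms K' by (rule prob_space_output_dist sets_output_dist)+
  have PSH: "prob_space (joint_dist PS HS K)"
    and sets_PSH: "sets (joint_dist PS HS K) = sets (PS \<Otimes>\<^sub>M PH)"
    using prob_space_joint_dist[OF S.prob_space_axioms K'] sets_joint_dist[OF S.prob_space_axioms K']
      sets_pair_measure_cong[OF refl sets_PH, of PS] by simp_all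
  have hoeffding: "\<forall>h \<in> space HS. \<forall>\<eta>::real. \<eta> > 0 \<longrightarrow>
      S.prob {s \<in> space PS. \<bar>emp_risk n s h - true_risk D h\<bar> > \<eta>} \<le> 2 * exp (- 2 * \<eta>\<^sup>2 * real n)"
    using emp_risk_deviation_prob_le[OF D n] measurable_compose[OF measurable_Pair1' loss_meas]
    by (simp add: PS_def)
  have "(\<integral>p. \<bar>emp_risk n (fst p) (snd p) - true_risk D (snd p)\<bar> \<partial>joint_dist PS HS K)
        \<le> 1 / sqrt (2 * real n) * (sqrt (ln 2 + ln A) + 1 / (2 * sqrt (ln 2 + ln A)))"
    if A: "exp_max_leakage PS HS K = ennreal A" for A
  proof (rule integral_le_max_leakage_bound[where PH=PH])
    show "(\<lambda>p. \<bar>emp_risk n (fst p) (snd p) - true_risk D (snd p)\<bar>) \<in> borel_measurable (PS \<Otimes>\<^sub>M PH)"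
      unfolding measurable_cong_sets[OF sets_pair_measure_cong[OF refl sets_PH] refl] PS_def
      by (rule measurable_emp_risk_deviation[OF D loss_meas])
    show "emeasure PS {s \<in> space PS. t < \<bar>emp_risk n (fst (s, h)) (snd (s, h)) - true_risk D (snd (s, h))\<bar>}
          \<le> ennreal (2 * exp (- (2 * real n) * t\<^sup>2))" if "h \<in> space PH" "t > 0" for h t
      using hoeffding that sets_eq_imp_space_eq[OF sets_PH]
      by (simp add: S.emeasure_eq_measure mult_ac ennreal_leI)
  qed (use A ac n S.prob_space_axioms PH PSH sets_PSH in \<open>auto simp: PH_def exp_max_leakage_def PS_def\<close>)
  then show ?thesis
    using hoeffding by (cases "exp_max_leakage PS HS K") (auto simp: max_leakage_def PS_def)
qed

end
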